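(* Fix $d\in\mathbb{N}$ and $\varepsilon>0$. Let $a=\lceil 32/\varepsilon+2\rceil$ and $Q=\{a^{2j-1}: j\in\mathbb{N}\}\subseteq\mathbb{N}$. Then for all $m_1<\dots<m_d<k$ in $Q$ and all step preserving maps $F\colon S^+_{\ell_\infty^k}\to S^+_{\ell_1^k}$ with $\omega_F(\tfrac1d)\leq\tfrac{\varepsilon}{8}$, we have \[\Big\|F(z(\bar m))-\frac1k\sum_{i=1}^k e_i\Big\|_1\leq\varepsilon,\] where $\bar m=(m_1,\dots,m_d)$ and $(e_i)_{i=1}^k$ is the standard basis of $\mathbb{R}^k$.
   Context: For $p\in\{1,\infty\}$, $S^+_{\ell_p^k}=\{(x_i)_{i=1}^k\in\mathbb{R}^k: \|x\|_p=1,\ x_i\ge0 \text{ for all } i\}$. For $0=m_0<m_1<\dots<m_d<k$, $z(\bar m)=\sum_{s=1}^d\big(1-\frac{s-1}{d}\big)1_{(m_{s-1},m_s]}\in S^+_{\ell_\infty^k}$, where $1_{(a,b]}$ is the vector with entries $1$ at indices $i\in(a,b]$ and $0$ elsewhere. Writing $F=(F_i)_{i=1}^k$ for the coordinates, $F$ is step preserving if $x_i=x_j$ implies $F_i(x)=F_j(x)$ for all $x$ in the domain and all $i,j$. $\omega_F(t)=\sup\{\|F(x)-F(y)\|_1: \|x-y\|_\infty\le t\}$. *)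

theory Defs
  imports "HOL-Analysis.Analysis"
begin

text \<open>Vectors in R^k are represented as functions nat => real, indexed by {1..k},
  and (canonically) zero outside {1..k}.\<close>

definition pos_sphere_linf :: "nat \<Rightarrow> (nat \<Rightarrow> real) set" where
  "pos_sphere_linf k = {x. (\<forall>i. i \<notin> {1..k} \<longrightarrow> x i = 0) \<and> (\<forall>i\<in>{1..k}. x i \<ge> 0)
      \<and> Max ((\<lambda>i. \<bar>x i\<bar>) ` {1..k}) = 1}"

definition pos_sphere_l1 :: "nat \<Rightarrow> (nat \<Rightarrow> real) set" where
  "pos_sphere_l1 k = {x. (\<forall>i. i \<notin> {1..k} \<longrightarrow> x i = 0) \<and> (\<forall>i\<in>{1..k}. x i \<ge> 0)
      \<and> (\<Sum>i=1..k. \<bar>x i\<bar>) = 1}"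

definition norm_inf :: "nat \<Rightarrow> (nat \<Rightarrow> real) \<Rightarrow> real" where
  "norm_inf k x = Max ((\<lambda>i. \<bar>x i\<bar>) ` {1..k})"

definition norm_one :: "nat \<Rightarrow> (nat \<Rightarrow> real) \<Rightarrow> real" where
  "norm_one k x = (\<Sum>i=1..k. \<bar>x i\<bar>)"

definition step_preserving :: "nat \<Rightarrow> ((nat \<Rightarrow> real) \<Rightarrow> (nat \<Rightarrow> real)) \<Rightarrow> bool" where
  "step_preserving k F \<longleftrightarrow> (\<forall>x\<in>pos_sphere_linf k. \<forall>i\<in>{1..k}. \<forall>j\<in>{1..k}.
      x i = x j \<longrightarrow> F x i = F x j)"

definition modulus :: "nat \<Rightarrow> ((nat \<Rightarrow> real) \<Rightarrow> (nat \<Rightarrow> real)) \<Rightarrow> real \<Rightarrow> ereal" where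
  "modulus k F t = (SUP p \<in> {(x, y). x \<in> pos_sphere_linf k \<and> y \<in> pos_sphere_linf k
        \<and> norm_inf k (\<lambda>i. x i - y i) \<le> t}.
      ereal (norm_one k (\<lambda>i. F (fst p) i - F (snd p) i)))"

text \<open>z(m): m 1 < ... < m d, with m_0 = 0 by convention.\<close>
definition zvec :: "nat \<Rightarrow> (nat \<Rightarrow> nat) \<Rightarrow> nat \<Rightarrow> real" where
  "zvec d m i = (\<Sum>s=1..d. (1 - (real s - 1) / real d) *
      (if (if s = 1 then 0 else m (s - 1)) < i \<and> i \<le> m s then 1 else 0))"

end

(*
  Let z = z(m) and z' = z(a m). Consecutive elements of Q differ by a factor of at least a^2,
  so the breakpoints a m_j of z' interleave with those of z; hence |z - z'|_inf <= 1/d and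
  f = F z, g = F z' are eps/8-close in l_1. By step preservation f is constant on the blocks
  (m_(j-1), m_j] and g on the blocks (a m_(j-1), a m_j]. On (m_j, a m_j] the vector g still has
  its value from the j-th block while f already has the value of the next one, so the f-mass of
  a block is bounded by the l_1 distance of f and g plus a 1/(a^2 - 1) fraction of the mass of
  the next block. Thus f has mass O(eps + 1/a^2) on {1..m_d}, and the rest of its mass is spread
  evenly over (m_d, k], which contains all but a fraction 1/a^2 of the coordinates.
*)
theory Submission
  imports Defs
begin

lemma sum_greaterThanAtMost_split:
  fixes h :: "nat \<Rightarrow> 'a::comm_monoid_add"
  assumes "x \<le> y" "y \<le> z"
  shows "sum h {x<..z} = sum h {x<..y} + sum h {y<..z}"
proof -
  have "{x<..z} = {x<..y} \<union> {y<..z}" using assms by auto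
  then show ?thesis by (simp add: sum.union_disjoint[symmetric])
qed

lemma sum_greaterThanAtMost_telescope:
  fixes h :: "nat \<Rightarrow> 'a::comm_monoid_add"
  assumes "\<And>j. j < n \<Longrightarrow> L j \<le> L (Suc j)"
  shows "(\<Sum>j<n. sum h {L j<..L (Suc j)}) = sum h {L 0<..L n}"
  using assms
proof (induction n)
  case (Suc n)
  have "L 0 \<le> L n" by (rule lift_Suc_mono_le_ivl[of "{..<n}"]) (use Suc.prems in auto)
  then show ?case
    using Suc sum_greaterThanAtMost_split[of "L 0" "L n" "L (Suc n)" h] by simp
qed simp

lemma sum_greaterThanAtMost_const:
  assumes "\<And>i. i \<in> {x<..y} \<Longrightarrow> h i = c"
  shows "sum h {x<..y} = real (y - x) * c"
  using assms by (simp add: sum.cong[of _ _ h "\<lambda>_. c"])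

section \<open>Mass estimates for block-constant vectors\<close>

(* The value c = g (a s) is compared with f s on (a p, s] and with f n on (s, a s], intervals of
   length at least 2s/3; so s f s <= s (|f s - c| + |f n - c| + f n), and s f n is at most a
   1/(a^2 - 1) fraction of the mass of f on (s, n]. *)
lemma block_mass_le:
  fixes f g :: "nat \<Rightarrow> real" and a p s n :: nat
  assumes a: "3 \<le> a" and ps: "3 * (a * p) \<le> s" and sn: "a * a * s \<le> n"
    and f_nonneg: "\<And>i. 0 \<le> f i"
    and f_lower: "\<And>i. i \<in> {p<..s} \<Longrightarrow> f i = f s"
    and f_upper: "\<And>i. i \<in> {s<..n} \<Longrightarrow> f i = f n"
    and g_const: "\<And>i. i \<in> {a * p<..a * s} \<Longrightarrow> g i = g (a * s)"
  shows "sum f {p<..s} \<le> 3/2 * (\<Sum>i\<in>{a * p<..a * s}. \<bar>f i - g i\<bar>)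
           + 1 / (real a * real a - 1) * sum f {s<..n}"
proof -
  define c where "c = g (a * s)"
  define \<beta> where "\<beta> = 1 / (real a * real a - 1)"
  have ord: "p \<le> a * p" "a * p \<le> s" "s \<le> a * s" "a * s \<le> n"
  proof -
    show "p \<le> a * p" "s \<le> a * s" using a by simp_all
    show "a * p \<le> s" using ps by linarith
    have "a * s \<le> a * (a * s)" using a by simp
    then show "a * s \<le> n" using sn by (simp only: mult.assoc)
  qed
  have lower: "sum f {p<..s} = real (s - p) * f s"
    using f_lower by (rule sum_greaterThanAtMost_const)
  have upper: "sum f {s<..n} = real (n - s) * f n"
    using f_upper by (rule sum_greaterThanAtMost_const)
  have "(\<Sum>i\<in>{a * p<..s}. \<bar>f i - g i\<bar>) = real (s - a * p) * \<bar>f s - c\<bar>"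
  proof (rule sum_greaterThanAtMost_const)
    fix i assume "i \<in> {a * p<..s}"
    then have "i \<in> {p<..s}" "i \<in> {a * p<..a * s}" using ord unfolding greaterThanAtMost_iff by linarith+
    then show "\<bar>f i - g i\<bar> = \<bar>f s - c\<bar>" using f_lower g_const unfolding c_def by metis
  qed
  moreover have "(\<Sum>i\<in>{s<..a * s}. \<bar>f i - g i\<bar>) = real (a * s - s) * \<bar>f n - c\<bar>"
  proof (rule sum_greaterThanAtMost_const)
    fix i assume "i \<in> {s<..a * s}"
    then have "i \<in> {s<..n}" "i \<in> {a * p<..a * s}" using ord unfolding greaterThanAtMost_iff by linarith+
    then show "\<bar>f i - g i\<bar> = \<bar>f n - c\<bar>" using f_upper g_const unfolding c_def by metis
  qed
  ultimately have diff_sum: "(\<Sum>i\<in>{a * p<..a * s}. \<bar>f i - g i\<bar>)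
      = real (s - a * p) * \<bar>f s - c\<bar> + real (a * s - s) * \<bar>f n - c\<bar>"
    unfolding sum_greaterThanAtMost_split[OF ord(2,3)] by simp
  have "real s * \<bar>f s - c\<bar> \<le> 3/2 * real (s - a * p) * \<bar>f s - c\<bar>"
    using ps ord by (intro mult_right_mono) (simp_all add: of_nat_diff flip: of_nat_mult)
  moreover have "real s * \<bar>f n - c\<bar> \<le> 3/2 * real (a * s - s) * \<bar>f n - c\<bar>"
  proof (rule mult_right_mono)
    have "3 * s \<le> a * s" using a by simp
    then show "real s \<le> 3/2 * real (a * s - s)" by linarith
  qed simp
  moreover have "real s * f n \<le> \<beta> * real (n - s) * f n"
  proof (rule mult_right_mono)
    have "9 \<le> real a * real a" using mult_mono[of 3 "real a" 3 "real a"] a by simp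
    moreover have "real a * real a * real s \<le> real n" using sn by (simp flip: of_nat_mult)
    ultimately show "real s \<le> \<beta> * real (n - s)"
      using ord by (simp add: \<beta>_def field_simps of_nat_diff)
  qed (rule f_nonneg)
  moreover have "real (s - p) * f s \<le> real s * (\<bar>f s - c\<bar> + \<bar>f n - c\<bar> + f n)"
  proof (rule mult_mono)
    show "f s \<le> \<bar>f s - c\<bar> + \<bar>f n - c\<bar> + f n" using f_nonneg[of n] by linarith
  qed (use f_nonneg[of s] in auto)
  ultimately have "real (s - p) * f s \<le> 3/2 * (real (s - a * p) * \<bar>f s - c\<bar>
      + real (a * s - s) * \<bar>f n - c\<bar>) + \<beta> * (real (n - s) * f n)"
    by (simp add: algebra_simps)
  then show ?thesis unfolding lower upper diff_sum \<beta>_def .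
qed

lemma head_mass_le:
  fixes f g :: "nat \<Rightarrow> real" and M :: "nat \<Rightarrow> nat" and a d :: nat
  assumes a: "3 \<le> a" and M0: "M 0 = 0"
    and gap: "\<And>j. 1 \<le> j \<Longrightarrow> j \<le> d \<Longrightarrow> a * a * M j \<le> M (Suc j)"
    and f_nonneg: "\<And>i. 0 \<le> f i"
    and f_const: "\<And>j i. j \<le> d \<Longrightarrow> i \<in> {M j<..M (Suc j)} \<Longrightarrow> f i = f (M (Suc j))"
    and g_const: "\<And>j i. j < d \<Longrightarrow> i \<in> {a * M j<..a * M (Suc j)} \<Longrightarrow> g i = g (a * M (Suc j))"
  shows "sum f {0<..M d} \<le> 3/2 * (\<Sum>i\<in>{0<..a * M d}. \<bar>f i - g i\<bar>)
           + 1 / (real a * real a - 1) * sum f {M 1<..M (Suc d)}"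
proof -
  define \<beta> where "\<beta> = 1 / (real a * real a - 1)"
  have M_mono: "M j \<le> M (Suc j)" if "j \<le> d" for j
  proof (cases "j = 0")
    case False
    have "M j \<le> a * a * M j" using a by simp
    then show ?thesis using gap[of j] False that by linarith
  qed (simp add: M0)
  have block: "sum f {M j<..M (Suc j)} \<le> 3/2 * (\<Sum>i\<in>{a * M j<..a * M (Suc j)}. \<bar>f i - g i\<bar>)
      + \<beta> * sum f {M (Suc j)<..M (Suc (Suc j))}" if j: "j < d" for j
    unfolding \<beta>_def
  proof (rule block_mass_le[OF a])
    show "3 * (a * M j) \<le> M (Suc j)"
    proof (cases "j = 0")
      case False
      have "3 * (a * M j) \<le> a * a * M j" using a by (simp add: mult.assoc)
      then show ?thesis using gap[of j] False j by linarith
    qed (simp add: M0)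
    show "a * a * M (Suc j) \<le> M (Suc (Suc j))" using gap[of "Suc j"] j by simp
    show "\<And>i. i \<in> {M j<..M (Suc j)} \<Longrightarrow> f i = f (M (Suc j))"
      by (rule f_const) (use j in auto)
    show "\<And>i. i \<in> {M (Suc j)<..M (Suc (Suc j))} \<Longrightarrow> f i = f (M (Suc (Suc j)))"
      by (rule f_const) (use j in auto)
    show "\<And>i. i \<in> {a * M j<..a * M (Suc j)} \<Longrightarrow> g i = g (a * M (Suc j))"
      by (rule g_const) (use j in auto)
  qed (rule f_nonneg)
  have "sum f {0<..M d} = (\<Sum>j<d. sum f {M j<..M (Suc j)})"
    using sum_greaterThanAtMost_telescope[of d M f] M_mono M0 by simp
  also have "\<dots> \<le> (\<Sum>j<d. 3/2 * (\<Sum>i\<in>{a * M j<..a * M (Suc j)}. \<bar>f i - g i\<bar>)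
      + \<beta> * sum f {M (Suc j)<..M (Suc (Suc j))})"
    using block by (intro sum_mono) simp
  also have "\<dots> = 3/2 * (\<Sum>j<d. \<Sum>i\<in>{a * M j<..a * M (Suc j)}. \<bar>f i - g i\<bar>)
      + \<beta> * (\<Sum>j<d. sum f {M (Suc j)<..M (Suc (Suc j))})"
    by (simp add: sum.distrib sum_distrib_left)
  also have "(\<Sum>j<d. \<Sum>i\<in>{a * M j<..a * M (Suc j)}. \<bar>f i - g i\<bar>) = (\<Sum>i\<in>{0<..a * M d}. \<bar>f i - g i\<bar>)"
    using sum_greaterThanAtMost_telescope[of d "\<lambda>j. a * M j"] M_mono M0 by simp
  also have "(\<Sum>j<d. sum f {M (Suc j)<..M (Suc (Suc j))}) = sum f {M 1<..M (Suc d)}"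
    using sum_greaterThanAtMost_telescope[of d "\<lambda>j. M (Suc j)"] M_mono by simp
  finally show ?thesis unfolding \<beta>_def .
qed

lemma norm_one_minus_uniform_le:
  fixes f :: "nat \<Rightarrow> real"
  assumes f: "f \<in> pos_sphere_l1 k" and n: "n \<le> k"
    and tail: "\<And>i. i \<in> {n<..k} \<Longrightarrow> f i = f k"
  shows "norm_one k (\<lambda>i. f i - 1 / real k) \<le> 2 * sum f {0<..n} + 2 * (real n / real k)"
proof -
  define H where "H = sum f {0<..n}"
  have f_nonneg: "0 \<le> f i" for i
    using f by (cases "i \<in> {1..k}") (auto simp: pos_sphere_l1_def)
  have "sum f {0<..k} = 1"
    using f f_nonneg by (simp add: pos_sphere_l1_def atLeastSucAtMost_greaterThanAtMost)
  then have total: "H + real (k - n) * f k = 1"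
    using sum_greaterThanAtMost_split[of 0 n k f] sum_greaterThanAtMost_const[of n k f, OF tail] n
    by (simp add: H_def)
  then have k: "0 < k" using n by (cases "k = 0") (auto simp: H_def)
  have "(\<Sum>i\<in>{0<..n}. \<bar>f i - 1 / real k\<bar>) \<le> (\<Sum>i\<in>{0<..n}. f i + 1 / real k)"
    using f_nonneg by (intro sum_mono) (simp add: abs_le_iff)
  then have head: "(\<Sum>i\<in>{0<..n}. \<bar>f i - 1 / real k\<bar>) \<le> H + real n / real k"
    by (simp add: sum.distrib H_def)
  have "(\<Sum>i\<in>{n<..k}. \<bar>f i - 1 / real k\<bar>) = real (k - n) * \<bar>f k - 1 / real k\<bar>"
    by (rule sum_greaterThanAtMost_const) (metis tail)
  also have "\<dots> = \<bar>real (k - n) * (f k - 1 / real k)\<bar>"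
    by (simp add: abs_mult)
  also have "\<dots> = \<bar>real (k - n) * f k - real (k - n) / real k\<bar>"
    by (simp add: right_diff_distrib)
  also have "\<dots> = \<bar>real n / real k - H\<bar>"
    using total k n by (simp add: of_nat_diff diff_divide_distrib)
  also have "\<dots> \<le> H + real n / real k"
    using f_nonneg by (simp add: H_def abs_le_iff sum_nonneg)
  finally have "(\<Sum>i\<in>{n<..k}. \<bar>f i - 1 / real k\<bar>) \<le> H + real n / real k" .
  moreover have "{1..k} = {0<..k}" by auto
  then have "norm_one k (\<lambda>i. f i - 1 / real k)
      = (\<Sum>i\<in>{0<..n}. \<bar>f i - 1 / real k\<bar>) + (\<Sum>i\<in>{n<..k}. \<bar>f i - 1 / real k\<bar>)"
    unfolding norm_one_def by (simp only:) (rule sum_greaterThanAtMost_split[OF _ n], simp)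
  ultimately show ?thesis using head unfolding H_def[symmetric] by linarith
qed

section \<open>The step vectors z(m)\<close>

(* The breakpoints m_0 = 0, m_1, ..., m_d, m_(d+1) = k, continued by k so that the sequence can be
   monotone on all of nat; z(m) takes the value 1 - j/d on the block (m_j, m_(j+1)]. *)
definition breakpoints :: "nat \<Rightarrow> (nat \<Rightarrow> nat) \<Rightarrow> nat \<Rightarrow> nat \<Rightarrow> nat" where
  "breakpoints d m k j = (if j = 0 then 0 else if j \<le> d then m j else k)"

lemma block_index_unique:
  fixes B :: "nat \<Rightarrow> nat"
  assumes "mono B" and "B j < i" "i \<le> B (Suc j)" and "B j' < i" "i \<le> B (Suc j')"
  shows "j = j'"
proof (rule ccontr)
  assume "j \<noteq> j'"
  then have "Suc j \<le> j' \<or> Suc j' \<le> j" by linarith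
  then have "B (Suc j) \<le> B j' \<or> B (Suc j') \<le> B j"
    using monoD[OF \<open>mono B\<close>] by blast
  then show False using assms by linarith
qed

lemma block_exists:
  fixes B :: "nat \<Rightarrow> nat"
  assumes "B 0 < i" "i \<le> B n"
  shows "\<exists>j<n. B j < i \<and> i \<le> B (Suc j)"
  using assms(2)
proof (induction n)
  case 0
  then show ?case using assms(1) by simp
next
  case (Suc n)
  show ?case
  proof (cases "i \<le> B n")
    case True
    then show ?thesis using Suc.IH less_SucI by blast
  next
    case False
    then show ?thesis using Suc.prems by auto
  qed
qed

lemma interleaved_block_index:
  fixes B B' :: "nat \<Rightarrow> nat"
  assumes "mono B" and interleave: "\<And>j. j \<le> d \<Longrightarrow> B j \<le> B' j \<and> B' j \<le> B (Suc j)"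
    and "j \<le> d" "B j < i" "i \<le> B (Suc j)"
    and "j' \<le> d" "B' j' < i" "i \<le> B' (Suc j')"
  shows "j' \<le> j \<and> j \<le> Suc j'"
proof
  show "j' \<le> j"
  proof (rule ccontr)
    assume "\<not> j' \<le> j"
    then have "B (Suc j) \<le> B j'" using \<open>mono B\<close> by (simp add: monoD)
    then show False using interleave[of j'] assms by linarith
  qed
  show "j \<le> Suc j'"
  proof (rule ccontr)
    assume "\<not> j \<le> Suc j'"
    then have "B (Suc (Suc j')) \<le> B j" "Suc j' \<le> d" using \<open>mono B\<close> assms by (simp_all add: monoD)
    then show False using interleave[of "Suc j'"] assms by linarith
  qed
qed

lemma zvec_eq_on_block:
  assumes d: "1 \<le> d" and B_mono: "mono (breakpoints d m k)" and j: "j \<le> d"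
    and i: "breakpoints d m k j < i" "i \<le> breakpoints d m k (Suc j)"
  shows "zvec d m i = 1 - real j / real d"
proof -
  have block: "((if s = 1 then 0 else m (s - 1)) < i \<and> i \<le> m s) \<longleftrightarrow> s = Suc j"
    if s: "s \<in> {1..d}" for s
  proof -
    have eqs: "(if s = 1 then 0 else m (s - 1)) = breakpoints d m k (s - 1)"
        "m s = breakpoints d m k (Suc (s - 1))"
      using s by (auto simp: breakpoints_def)
    have "(breakpoints d m k (s - 1) < i \<and> i \<le> breakpoints d m k (Suc (s - 1))) \<longleftrightarrow> s - 1 = j"
      using block_index_unique[OF B_mono _ _ i, of "s - 1"] i by blast
    also have "s - 1 = j \<longleftrightarrow> s = Suc j" using s by auto
    finally show ?thesis by (simp only: eqs)
  qed
  have "zvec d m i = (\<Sum>s\<in>{1..d}. if s = Suc j then 1 - real j / real d else 0)"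
    unfolding zvec_def
  proof (rule sum.cong[OF refl])
    fix s assume s: "s \<in> {1..d}"
    show "(1 - (real s - 1) / real d) * (if (if s = 1 then 0 else m (s - 1)) < i \<and> i \<le> m s then 1 else 0)
        = (if s = Suc j then 1 - real j / real d else 0)"
      unfolding block[OF s] by simp
  qed
  also have "\<dots> = 1 - real j / real d"
    using d j by (cases "j = d") (simp_all add: sum.delta)
  finally show ?thesis .
qed

lemma zvec_eq_zero_above:
  assumes "mono (breakpoints d m k)" and "k < i"
  shows "zvec d m i = 0"
  unfolding zvec_def
proof (rule sum.neutral, intro ballI)
  fix s assume s: "s \<in> {1..d}"
  have "breakpoints d m k s \<le> breakpoints d m k (Suc d)"
    using s by (intro monoD[OF assms(1)]) simp
  then have "m s < i" using s assms(2) by (simp add: breakpoints_def)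
  then show "(1 - (real s - 1) / real d) *
      (if (if s = 1 then 0 else m (s - 1)) < i \<and> i \<le> m s then 1 else 0) = 0" by simp
qed

lemma zvec_in_pos_sphere_linf:
  assumes d: "1 \<le> d" and B_mono: "mono (breakpoints d m k)" and m1: "1 \<le> m 1"
  shows "zvec d m \<in> pos_sphere_linf k"
proof -
  let ?B = "breakpoints d m k"
  have B0: "?B 0 = 0" and B1: "?B 1 = m 1" and Bk: "?B (Suc d) = k"
    using d by (simp_all add: breakpoints_def)
  have k: "m 1 \<le> k" using monoD[OF B_mono, of 1 "Suc d"] B1 Bk by simp
  have range: "0 \<le> zvec d m i \<and> zvec d m i \<le> 1" if i: "i \<in> {1..k}" for i
  proof -
    obtain j where "j < Suc d" "?B j < i" "i \<le> ?B (Suc j)"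
      using block_exists[of ?B i "Suc d"] B0 Bk i by auto
    then have "zvec d m i = 1 - real j / real d"
      by (intro zvec_eq_on_block[OF d B_mono]) simp_all
    moreover have "real j / real d \<le> 1" using \<open>j < Suc d\<close> d by (simp add: divide_le_eq_1)
    ultimately show ?thesis by simp
  qed
  have outside: "zvec d m i = 0" if "i \<notin> {1..k}" for i
  proof (cases "i = 0")
    case False
    then show ?thesis using zvec_eq_zero_above[OF B_mono] that by simp
  qed (simp add: zvec_def)
  have "zvec d m 1 = 1 - real 0 / real d"
    using B0 B1 m1 by (intro zvec_eq_on_block[OF d B_mono]) simp_all
  then have one: "zvec d m 1 = 1" by simp
  have "Max ((\<lambda>i. \<bar>zvec d m i\<bar>) ` {1..k}) = 1"
  proof (rule Max_eqI)
    show "y \<le> 1" if "y \<in> (\<lambda>i. \<bar>zvec d m i\<bar>) ` {1..k}" for y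
      using that range by auto
    show "1 \<in> (\<lambda>i. \<bar>zvec d m i\<bar>) ` {1..k}"
      using one k m1 by (intro image_eqI[of _ _ 1]) auto
  qed simp
  then show ?thesis unfolding pos_sphere_linf_def using outside range by auto
qed

lemma norm_inf_zvec_diff_le:
  assumes d: "1 \<le> d" and "0 < k"
    and B_mono: "mono (breakpoints d m k)" and B'_mono: "mono (breakpoints d m' k)"
    and interleave: "\<And>j. j \<le> d \<Longrightarrow> breakpoints d m k j \<le> breakpoints d m' k j
                              \<and> breakpoints d m' k j \<le> breakpoints d m k (Suc j)"
  shows "norm_inf k (\<lambda>i. zvec d m i - zvec d m' i) \<le> 1 / real d"
proof -
  let ?B = "breakpoints d m k" and ?B' = "breakpoints d m' k"
  have ends: "?B 0 = 0" "?B' 0 = 0" "?B (Suc d) = k" "?B' (Suc d) = k"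
    by (simp_all add: breakpoints_def)
  have "\<bar>zvec d m i - zvec d m' i\<bar> \<le> 1 / real d" if i: "i \<in> {1..k}" for i
  proof -
    obtain j where j: "j < Suc d" "?B j < i" "i \<le> ?B (Suc j)"
      using block_exists[of ?B i "Suc d"] ends i by auto
    obtain j' where j': "j' < Suc d" "?B' j' < i" "i \<le> ?B' (Suc j')"
      using block_exists[of ?B' i "Suc d"] ends i by auto
    have "j' \<le> j \<and> j \<le> Suc j'"
      using interleaved_block_index[OF B_mono interleave] j j' by simp
    moreover have "zvec d m i = 1 - real j / real d" "zvec d m' i = 1 - real j' / real d"
      using zvec_eq_on_block[OF d B_mono _ j(2,3)] zvec_eq_on_block[OF d B'_mono _ j'(2,3)] j j'
      by simp_all
    ultimately show ?thesis
      using d by (simp add: abs_le_iff divide_le_eq_1 field_simps)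
  qed
  then show ?thesis
    unfolding norm_inf_def using \<open>0 < k\<close> by (subst Max_le_iff) auto
qed

lemma breakpoints_scaled:
  assumes "j \<le> d"
  shows "breakpoints d (\<lambda>s. a * m s) k j = a * breakpoints d m k j"
  using assms by (simp add: breakpoints_def)

lemma breakpoints_scaled_interleave:
  fixes a :: nat
  assumes a: "1 \<le> a"
    and gap: "\<And>j. 1 \<le> j \<Longrightarrow> j \<le> d \<Longrightarrow> a * breakpoints d m k j \<le> breakpoints d m k (Suc j)"
    and j: "j \<le> d"
  shows "breakpoints d m k j \<le> breakpoints d (\<lambda>s. a * m s) k j
         \<and> breakpoints d (\<lambda>s. a * m s) k j \<le> breakpoints d m k (Suc j)"
proof (cases "j = 0")
  case False
  then show ?thesis using gap[of j] a j by (simp add: breakpoints_scaled)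
qed (simp add: breakpoints_def)

lemma mono_breakpoints_scaled:
  fixes a :: nat
  assumes "1 \<le> a"
    and "\<And>j. 1 \<le> j \<Longrightarrow> j \<le> d \<Longrightarrow> a * breakpoints d m k j \<le> breakpoints d m k (Suc j)"
  shows "mono (breakpoints d (\<lambda>s. a * m s) k)"
  unfolding mono_iff_le_Suc
proof
  fix j
  let ?B = "breakpoints d m k" and ?B' = "breakpoints d (\<lambda>s. a * m s) k"
  consider "j < d" | "j = d" | "d < j" by linarith
  then show "?B' j \<le> ?B' (Suc j)"
  proof cases
    case 1
    then show ?thesis
      using breakpoints_scaled_interleave[OF assms, of j] breakpoints_scaled_interleave[OF assms, of "Suc j"]
      by simp
  next
    case 2
    then show ?thesis using breakpoints_scaled_interleave[OF assms, of j] by (simp add: breakpoints_def)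
  qed (simp add: breakpoints_def)
qed

section \<open>Step preserving maps on the step vectors\<close>

lemma step_preserving_const_on_block:
  assumes sp: "step_preserving k F" and d: "1 \<le> d"
    and B_mono: "mono (breakpoints d m k)" and m1: "1 \<le> m 1" and j: "j \<le> d"
    and i: "i \<in> {breakpoints d m k j<..breakpoints d m k (Suc j)}"
  shows "F (zvec d m) i = F (zvec d m) (breakpoints d m k (Suc j))"
proof -
  let ?b = "breakpoints d m k (Suc j)"
  have "?b \<le> breakpoints d m k (Suc d)" using j by (intro monoD[OF B_mono]) simp
  then have "i \<in> {1..k}" "?b \<in> {1..k}" using i by (auto simp: breakpoints_def)
  moreover have "zvec d m i = zvec d m ?b"
    using i zvec_eq_on_block[OF d B_mono j] by simp
  ultimately show ?thesis
    using sp zvec_in_pos_sphere_linf[OF d B_mono m1] unfolding step_preserving_def by blast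
qed

lemma norm_one_le_modulus:
  assumes "x \<in> pos_sphere_linf k" "y \<in> pos_sphere_linf k" "norm_inf k (\<lambda>i. x i - y i) \<le> t"
  shows "ereal (norm_one k (\<lambda>i. F x i - F y i)) \<le> modulus k F t"
  unfolding modulus_def by (rule SUP_upper2[of "(x, y)"]) (use assms in auto)

lemma F_zvec_scaled_dist_le:
  fixes a :: nat
  assumes d: "1 \<le> d" and a: "1 \<le> a" and m1: "1 \<le> m 1" and B_mono: "mono (breakpoints d m k)"
    and gap: "\<And>j. 1 \<le> j \<Longrightarrow> j \<le> d \<Longrightarrow> a * breakpoints d m k j \<le> breakpoints d m k (Suc j)"
    and modu: "modulus k F (1 / real d) \<le> ereal \<delta>"
  shows "norm_one k (\<lambda>i. F (zvec d m) i - F (zvec d (\<lambda>s. a * m s)) i) \<le> \<delta>"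
proof -
  have k: "0 < k"
    using m1 d monoD[OF B_mono, of 1 "Suc d"] by (simp add: breakpoints_def)
  have am1: "1 \<le> a * m 1" using a m1 by simp
  note B'_mono = mono_breakpoints_scaled[OF a gap]
  have "ereal (norm_one k (\<lambda>i. F (zvec d m) i - F (zvec d (\<lambda>s. a * m s)) i)) \<le> modulus k F (1 / real d)"
  proof (rule norm_one_le_modulus)
    show "zvec d m \<in> pos_sphere_linf k" "zvec d (\<lambda>s. a * m s) \<in> pos_sphere_linf k"
      using zvec_in_pos_sphere_linf[OF d B_mono m1] zvec_in_pos_sphere_linf[OF d B'_mono am1] by simp_all
    show "norm_inf k (\<lambda>i. zvec d m i - zvec d (\<lambda>s. a * m s) i) \<le> 1 / real d"
      using norm_inf_zvec_diff_le[OF d k B_mono B'_mono] breakpoints_scaled_interleave[OF a gap] by blast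
  qed
  also note modu
  finally show ?thesis by simp
qed

lemma F_zvec_head_mass_le:
  fixes a :: nat and F :: "(nat \<Rightarrow> real) \<Rightarrow> (nat \<Rightarrow> real)"
  assumes d: "1 \<le> d" and a: "3 \<le> a" and m1: "1 \<le> m 1" and B_mono: "mono (breakpoints d m k)"
    and gap: "\<And>j. 1 \<le> j \<Longrightarrow> j \<le> d \<Longrightarrow> a * a * breakpoints d m k j \<le> breakpoints d m k (Suc j)"
    and F_maps: "\<forall>x\<in>pos_sphere_linf k. F x \<in> pos_sphere_l1 k"
    and sp: "step_preserving k F"
    and modu: "modulus k F (1 / real d) \<le> ereal \<delta>"
  shows "sum (F (zvec d m)) {0<..m d} \<le> 3/2 * \<delta> + 1 / (real a * real a - 1)"
proof -
  let ?B = "breakpoints d m k" and ?m' = "\<lambda>s. a * m s"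
  define f where "f = F (zvec d m)"
  define g where "g = F (zvec d ?m')"
  define \<beta> where "\<beta> = 1 / (real a * real a - 1)"
  have ends: "?B 0 = 0" "?B 1 = m 1" "?B d = m d" "?B (Suc d) = k"
    using d by (simp_all add: breakpoints_def)
  have a1: "1 \<le> a" and am1: "1 \<le> a * m 1" using a m1 by simp_all
  have a_gap: "a * ?B j \<le> ?B (Suc j)" if "1 \<le> j" "j \<le> d" for j
    using gap[OF that] le_trans[of "a * ?B j" "a * a * ?B j"] a by simp
  note B'_mono = mono_breakpoints_scaled[OF a1 a_gap]
  have f_sphere: "f \<in> pos_sphere_l1 k"
    using F_maps zvec_in_pos_sphere_linf[OF d B_mono m1] by (simp add: f_def)
  then have f_nonneg: "0 \<le> f i" for i
    by (cases "i \<in> {1..k}") (auto simp: pos_sphere_l1_def)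
  have f_const: "f i = f (?B (Suc j))" if "j \<le> d" "i \<in> {?B j<..?B (Suc j)}" for i j
    unfolding f_def using step_preserving_const_on_block[OF sp d B_mono m1 that] .
  have g_const: "g i = g (a * ?B (Suc j))" if j: "j < d" and i: "i \<in> {a * ?B j<..a * ?B (Suc j)}" for i j
    using step_preserving_const_on_block[OF sp d B'_mono am1, of j i] i j
    unfolding g_def by (simp add: breakpoints_scaled)
  have "sum f {0<..m d} \<le> 3/2 * (\<Sum>i\<in>{0<..a * m d}. \<bar>f i - g i\<bar>) + \<beta> * sum f {m 1<..k}"
    using head_mass_le[of a ?B d f g, OF a ends(1) gap f_nonneg f_const g_const] unfolding ends \<beta>_def by simp
  moreover have "(\<Sum>i\<in>{0<..a * m d}. \<bar>f i - g i\<bar>) \<le> \<delta>"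
  proof -
    have "a * m d \<le> k"
      using breakpoints_scaled_interleave[OF a1 a_gap, of d] ends breakpoints_scaled[of d d a m k] by simp
    then have "(\<Sum>i\<in>{0<..a * m d}. \<bar>f i - g i\<bar>) \<le> norm_one k (\<lambda>i. f i - g i)"
      unfolding norm_one_def by (intro sum_mono2) auto
    also have "\<dots> \<le> \<delta>"
      using F_zvec_scaled_dist_le[OF d a1 m1 B_mono a_gap modu] unfolding f_def g_def .
    finally show ?thesis .
  qed
  moreover have "\<beta> * sum f {m 1<..k} \<le> \<beta>"
  proof -
    have "sum f {m 1<..k} \<le> sum f {1..k}" by (rule sum_mono2) (use f_nonneg in auto)
    also have "\<dots> = 1" using f_sphere f_nonneg by (simp add: pos_sphere_l1_def)
    finally have "sum f {m 1<..k} \<le> 1" .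
    moreover have "9 \<le> real a * real a" using mult_mono[of 3 "real a" 3 "real a"] a by simp
    ultimately show ?thesis by (simp add: \<beta>_def divide_right_mono)
  qed
  ultimately show ?thesis unfolding f_def \<beta>_def by linarith
qed

lemma F_zvec_near_uniform:
  fixes a :: nat and F :: "(nat \<Rightarrow> real) \<Rightarrow> (nat \<Rightarrow> real)"
  assumes d: "1 \<le> d" and a: "3 \<le> a" and m1: "1 \<le> m 1" and B_mono: "mono (breakpoints d m k)"
    and gap: "\<And>j. 1 \<le> j \<Longrightarrow> j \<le> d \<Longrightarrow> a * a * breakpoints d m k j \<le> breakpoints d m k (Suc j)"
    and F_maps: "\<forall>x\<in>pos_sphere_linf k. F x \<in> pos_sphere_l1 k"
    and sp: "step_preserving k F"
    and modu: "modulus k F (1 / real d) \<le> ereal \<delta>"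
  shows "norm_one k (\<lambda>i. F (zvec d m) i - 1 / real k) \<le> 3 * \<delta> + 4 / (real a * real a - 1)"
proof -
  let ?B = "breakpoints d m k"
  have ends: "?B d = m d" "?B (Suc d) = k"
    using d by (simp_all add: breakpoints_def)
  have "?B d \<le> ?B (Suc d)" by (rule monoD[OF B_mono]) simp
  then have md: "m d \<le> k" using ends by simp
  have "real a * real a * real (m d) \<le> real k"
    using gap[OF d order_refl] ends by (simp flip: of_nat_mult)
  moreover have "9 \<le> real a * real a" using mult_mono[of 3 "real a" 3 "real a"] a by simp
  moreover have "0 < k" using m1 md monoD[OF B_mono, of 1 d] d by (simp add: breakpoints_def)
  ultimately have ratio: "real (m d) / real k \<le> 1 / (real a * real a - 1)"
    by (simp add: field_simps)
  have "norm_one k (\<lambda>i. F (zvec d m) i - 1 / real k)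
      \<le> 2 * sum (F (zvec d m)) {0<..m d} + 2 * (real (m d) / real k)"
  proof (rule norm_one_minus_uniform_le[OF _ md])
    show "F (zvec d m) \<in> pos_sphere_l1 k"
      using F_maps zvec_in_pos_sphere_linf[OF d B_mono m1] by simp
    show "F (zvec d m) i = F (zvec d m) k" if "i \<in> {m d<..k}" for i
      using step_preserving_const_on_block[OF sp d B_mono m1 order_refl, of i] that ends by simp
  qed
  then show ?thesis
    using F_zvec_head_mass_le[OF d a m1 B_mono gap F_maps sp modu] ratio by linarith
qed

section \<open>The parameters a and Q\<close>

lemma odd_powers_gap:
  fixes a x y :: nat
  assumes a: "2 \<le> a"
    and x: "x \<in> {a ^ (2 * j - 1) | j. j \<ge> 1}" and y: "y \<in> {a ^ (2 * j - 1) | j. j \<ge> 1}"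
    and "x < y"
  shows "a * a * x \<le> y"
proof -
  obtain i j where i: "x = a ^ (2 * i - 1)" "1 \<le> i" and j: "y = a ^ (2 * j - 1)" "1 \<le> j"
    using x y by blast
  have "2 * i - 1 < 2 * j - 1"
    using \<open>x < y\<close> a unfolding i j by (simp add: power_strict_increasing_iff)
  then have "Suc (Suc (2 * i - 1)) \<le> 2 * j - 1" using i j by presburger
  then have "a ^ Suc (Suc (2 * i - 1)) \<le> y"
    unfolding j using a by (intro power_increasing) simp_all
  then show ?thesis unfolding i by (simp add: mult.assoc)
qed

lemma breakpoints_odd_powers:
  fixes a k :: nat and m :: "nat \<Rightarrow> nat"
  assumes a: "2 \<le> a" and d: "1 \<le> d"
    and mQ: "\<forall>s\<in>{1..d}. m s \<in> {a ^ (2 * j - 1) | j. j \<ge> 1}" and kQ: "k \<in> {a ^ (2 * j - 1) | j. j \<ge> 1}"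
    and incr: "\<forall>s\<in>{1..<d}. m s < m (s + 1)" and mdk: "m d < k"
  shows "1 \<le> m 1" and "mono (breakpoints d m k)"
    and "\<And>j. 1 \<le> j \<Longrightarrow> j \<le> d \<Longrightarrow> a * a * breakpoints d m k j \<le> breakpoints d m k (Suc j)"
proof -
  let ?B = "breakpoints d m k"
  have "m 1 \<in> {a ^ (2 * j - 1) | j. j \<ge> 1}" using mQ d by simp
  then show m1: "1 \<le> m 1" using a by (auto intro: one_le_power)
  have B_step: "?B j < ?B (Suc j)" if j: "j \<le> d" for j
  proof -
    consider "j = 0" | "1 \<le> j" "j < d" | "j = d" using j by linarith
    then show ?thesis using m1 incr mdk by cases (auto simp: breakpoints_def)
  qed
  show "mono ?B"
    unfolding mono_iff_le_Suc
  proof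
    fix j
    show "?B j \<le> ?B (Suc j)"
      using B_step[of j] by (cases "j \<le> d") (simp_all add: breakpoints_def)
  qed
  show "a * a * ?B j \<le> ?B (Suc j)" if "1 \<le> j" "j \<le> d" for j
  proof (rule odd_powers_gap[OF a _ _ B_step])
    show "?B j \<in> {a ^ (2 * j - 1) | j. j \<ge> 1}" "?B (Suc j) \<in> {a ^ (2 * j - 1) | j. j \<ge> 1}"
      using that mQ kQ by (auto simp: breakpoints_def)
  qed (use that in simp)
qed

lemma ceiling_parameter_bounds:
  fixes \<epsilon> :: real
  assumes "0 < \<epsilon>"
  shows "3 \<le> nat \<lceil>32 / \<epsilon> + 2\<rceil>"
    and "3 * (\<epsilon> / 8) + 4 / (real (nat \<lceil>32 / \<epsilon> + 2\<rceil>) * real (nat \<lceil>32 / \<epsilon> + 2\<rceil>) - 1) \<le> \<epsilon>"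
proof -
  define a where "a = real (nat \<lceil>32 / \<epsilon> + 2\<rceil>)"
  have pos: "0 < 32 / \<epsilon>" using assms by simp
  then have "0 \<le> \<lceil>32 / \<epsilon> + 2\<rceil>" unfolding zero_le_ceiling by linarith
  then have "a = of_int \<lceil>32 / \<epsilon> + 2\<rceil>" unfolding a_def by (simp only: of_nat_nat)
  then have a_ge: "32 / \<epsilon> + 2 \<le> a" by simp
  then show "3 \<le> nat \<lceil>32 / \<epsilon> + 2\<rceil>"
    using pos unfolding a_def by linarith
  then have "4 \<le> a + 1" unfolding a_def by linarith
  have "128 / \<epsilon> \<le> (a - 1) * (a + 1)"
    using mult_mono[of "32 / \<epsilon>" "a - 1" 4 "a + 1"] \<open>4 \<le> a + 1\<close> a_ge pos by simp
  then have "128 / \<epsilon> \<le> a * a - 1" by (simp add: algebra_simps)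
  moreover have "0 < 128 / \<epsilon>" using assms by simp
  ultimately have "4 / (a * a - 1) \<le> 4 / (128 / \<epsilon>)"
    by (intro divide_left_mono mult_pos_pos) linarith+
  also have "\<dots> = \<epsilon> / 32" by simp
  finally show "3 * (\<epsilon> / 8) + 4 / (a * a - 1) \<le> \<epsilon>" using assms by simp
qed

theorem theorem1p5:
  fixes d :: nat and \<epsilon> :: real
  assumes "d \<ge> 1" and "\<epsilon> > 0"
  defines "a \<equiv> nat \<lceil>32 / \<epsilon> + 2\<rceil>"
  defines "Q \<equiv> {a ^ (2 * j - 1) | j. j \<ge> (1::nat)}"
  shows "\<forall>(m :: nat \<Rightarrow> nat) (k :: nat) (F :: (nat \<Rightarrow> real) \<Rightarrow> (nat \<Rightarrow> real)).
           (\<forall>s\<in>{1..d}. m s \<in> Q) \<and> k \<in> Q \<and>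
           (\<forall>s\<in>{1..<d}. m s < m (s + 1)) \<and> m d < k \<and>
           (\<forall>x\<in>pos_sphere_linf k. F x \<in> pos_sphere_l1 k) \<and>
           step_preserving k F \<and>
           modulus k F (1 / real d) \<le> ereal (\<epsilon> / 8)
         \<longrightarrow> norm_one k (\<lambda>i. F (zvec d m) i - 1 / real k) \<le> \<epsilon>"
proof (intro allI impI, elim conjE)
  fix m :: "nat \<Rightarrow> nat" and k :: nat and F :: "(nat \<Rightarrow> real) \<Rightarrow> (nat \<Rightarrow> real)"
  assume mQ: "\<forall>s\<in>{1..d}. m s \<in> Q" and kQ: "k \<in> Q"
    and incr: "\<forall>s\<in>{1..<d}. m s < m (s + 1)" and mdk: "m d < k"
    and F_maps: "\<forall>x\<in>pos_sphere_linf k. F x \<in> pos_sphere_l1 k" and sp: "step_preserving k F"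
    and modu: "modulus k F (1 / real d) \<le> ereal (\<epsilon> / 8)"
  have a: "3 \<le> a" and a_large: "3 * (\<epsilon> / 8) + 4 / (real a * real a - 1) \<le> \<epsilon>"
    using ceiling_parameter_bounds[OF assms(2)] unfolding a_def by simp_all
  have "2 \<le> a" using a by simp
  note breakpoints = breakpoints_odd_powers[OF this assms(1) mQ[unfolded Q_def] kQ[unfolded Q_def] incr mdk]
  have "norm_one k (\<lambda>i. F (zvec d m) i - 1 / real k) \<le> 3 * (\<epsilon> / 8) + 4 / (real a * real a - 1)"
    by (rule F_zvec_near_uniform[OF assms(1) a breakpoints F_maps sp modu])
  then show "norm_one k (\<lambda>i. F (zvec d m) i - 1 / real k) \<le> \<epsilon>"
    using a_large by linarith
qed

end
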